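(* Let $m$ and $k$ be positive integers with $k\leq m/2$, and let $H$ be $\mathrm{Alt}(m)$ or $\mathrm{Sym}(m)$ in its natural action on the set of $k$-element subsets of $\{1,\ldots,m\}$. If $H$ contains a permutation $g$ that has at most four cycles in this action, then either $k=3$ and $m=6$; or $k=2$ and $m\leq 9$; or $k=1$.
   Context: The number of cycles of a permutation is the number of orbits of the cyclic group it generates, fixed points included. *)

theory Defs
  imports "HOL-Combinatorics.Permutations"
begin

definition Sym :: "nat \<Rightarrow> (nat \<Rightarrow> nat) set" where
  "Sym m = {g. g permutes {1..m}}"

definition Alt :: "nat \<Rightarrow> (nat \<Rightarrow> nat) set" where
  "Alt m = {g. g permutes {1..m} \<and> evenperm g}"

definition ksubsets :: "nat \<Rightarrow> nat \<Rightarrow> nat set set" where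
  "ksubsets m k = {A. A \<subseteq> {1..m} \<and> card A = k}"

text \<open>Orbit of x under the cyclic group generated by a permutation f of a finite set X
  (for a permutation of a finite set, the forward orbit equals the orbit of the generated group).\<close>
definition cyc_orbit :: "('a \<Rightarrow> 'a) \<Rightarrow> 'a set \<Rightarrow> 'a \<Rightarrow> 'a set" where
  "cyc_orbit f X x = {y \<in> X. \<exists>n. (f ^^ n) x = y}"

text \<open>Number of cycles of f acting on X: number of orbits, fixed points included.\<close>
definition num_cycles :: "('a \<Rightarrow> 'a) \<Rightarrow> 'a set \<Rightarrow> nat" where
  "num_cycles f X = card (cyc_orbit f X ` X)"

end

theory Submission
  imports Defs Complex_Main "HOL-Combinatorics.Orbits"
begin

text \<open>
  If \<open>C\<close> and \<open>S\<close> are disjoint \<open>g\<close>-invariant subsets of \<open>{1..m}\<close> and \<open>g\<^sup>d\<close> fixes \<open>C\<close>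
  pointwise, then \<open>|A \<inter> C|\<close>, \<open>|A \<inter> S|\<close> and the \<open>\<langle>g\<rangle>\<close>-orbit of \<open>A \<inter> C\<close> are
  invariants of the cycle of \<open>g\<close> through a \<open>k\<close>-subset \<open>A\<close>, and every value compatible with
  the sizes of \<open>C\<close>, \<open>S\<close> and their complement occurs. So \<open>g\<close> has at least as many cycles on
  \<open>k\<close>-subsets as it has cycles on \<open>a\<close>-subsets of \<open>C\<close>, summed over the admissible sizes
  \<open>(a, b)\<close>, and each summand is at least \<open>(|C| choose a) / d\<close>. Taking for \<open>C\<close> (and \<open>S\<close>)
  cycles of \<open>g\<close> on points and distinguishing their lengths gives five cycles outside the
  exceptional cases; when all cycles on points have length at most 3, \<open>g\<^sup>6 = 1\<close> and
  \<open>(m choose k) / 6\<close> alone exceeds 4.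
\<close>

lemma cyc_orbit_self: "x \<in> X \<Longrightarrow> x \<in> cyc_orbit f X x"
  unfolding cyc_orbit_def by (auto intro: exI[of _ 0])

lemma num_cycles_pos: "finite X \<Longrightarrow> X \<noteq> {} \<Longrightarrow> 0 < num_cycles f X"
  unfolding num_cycles_def by (simp add: card_gt_0_iff)

lemma cyc_orbit_apply:
  assumes "0 < d" and "(f ^^ d) x = x"
  shows "cyc_orbit f X (f x) = cyc_orbit f X x"
proof (intro set_eqI iffI)
  fix y assume "y \<in> cyc_orbit f X (f x)"
  then obtain n where "y \<in> X" "(f ^^ n) (f x) = y" unfolding cyc_orbit_def by blast
  then have "y \<in> X" "(f ^^ Suc n) x = y" by (simp_all add: funpow_swap1)
  then show "y \<in> cyc_orbit f X x" unfolding cyc_orbit_def by blast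
next
  fix y assume "y \<in> cyc_orbit f X x"
  then obtain n where "y \<in> X" "(f ^^ n) x = y" unfolding cyc_orbit_def by blast
  moreover have "(f ^^ (n + d - 1)) (f x) = (f ^^ Suc (n + d - 1)) x"
    by (simp only: funpow_Suc_right comp_apply)
  then have "(f ^^ (n + d - 1)) (f x) = (f ^^ n) x"
    using assms by (simp add: funpow_add)
  ultimately show "y \<in> cyc_orbit f X (f x)" unfolding cyc_orbit_def by auto
qed

lemma image_cyc_orbit_invariant:
  assumes "\<forall>x\<in>X. f x \<in> X" and "\<forall>x\<in>X. h (f x) = h x" and "x \<in> X"
  shows "h ` cyc_orbit f X x = {h x}"
proof -
  have "(f ^^ n) x \<in> X \<and> h ((f ^^ n) x) = h x" for n
    by (induction n) (use assms in auto)
  then show ?thesis using cyc_orbit_self[OF assms(3)] unfolding cyc_orbit_def by blast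
qed

lemma card_image_le_num_cycles:
  assumes "finite X" and "\<forall>x\<in>X. f x \<in> X" and "\<forall>x\<in>X. h (f x) = h x"
  shows "card (h ` X) \<le> num_cycles f X"
proof -
  have "h ` X = (\<lambda>Q. the_elem (h ` Q)) ` cyc_orbit f X ` X"
    using image_cyc_orbit_invariant[OF assms(2,3)] by (simp add: image_comp)
  then show ?thesis
    unfolding num_cycles_def by (metis card_image_le assms(1) finite_imageI)
qed

lemma card_le_mult_num_cycles:
  assumes "finite X" and "0 < d" and "\<forall>x\<in>X. (f ^^ d) x = x"
  shows "card X \<le> d * num_cycles f X"
proof -
  have card_orbit: "card (cyc_orbit f X x) \<le> d" if "x \<in> X" for x
  proof -
    have mod: "(f ^^ n) x = (f ^^ (n mod d)) x" for n
      using assms(3) that by (simp add: funpow_mod_eq)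
    have "cyc_orbit f X x \<subseteq> (\<lambda>n. (f ^^ n) x) ` {..<d}"
    proof
      fix y assume "y \<in> cyc_orbit f X x"
      then obtain n where "y = (f ^^ (n mod d)) x" using mod by (auto simp: cyc_orbit_def)
      then show "y \<in> (\<lambda>n. (f ^^ n) x) ` {..<d}" using assms(2) by simp
    qed
    then have "card (cyc_orbit f X x) \<le> card ((\<lambda>n. (f ^^ n) x) ` {..<d})"
      by (intro card_mono) auto
    also have "\<dots> \<le> d" using card_image_le[of "{..<d}"] by simp
    finally show ?thesis .
  qed
  have "X = \<Union> (cyc_orbit f X ` X)"
    using cyc_orbit_self[of _ X f] by (auto simp: cyc_orbit_def[of f X])
  then have "card X \<le> (\<Sum>Q\<in>cyc_orbit f X ` X. card Q)"
    by (metis card_Union_le_sum_card)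
  also have "\<dots> \<le> num_cycles f X * d"
    unfolding num_cycles_def using card_orbit sum_bounded_above[of "cyc_orbit f X ` X" card d] by auto
  finally show ?thesis by (simp add: mult.commute)
qed

definition subsets_of_card :: "'a set \<Rightarrow> nat \<Rightarrow> 'a set set" where
  "subsets_of_card C a = {U. U \<subseteq> C \<and> card U = a}"

lemma ksubsets_eq_subsets_of_card: "ksubsets m k = subsets_of_card {1..m} k"
  unfolding ksubsets_def subsets_of_card_def ..

lemma finite_subsets_of_card: "finite C \<Longrightarrow> finite (subsets_of_card C a)"
  unfolding subsets_of_card_def by (rule finite_subset[of _ "Pow C"]) auto

lemma subsets_of_card_nonempty: "a \<le> card C \<Longrightarrow> subsets_of_card C a \<noteq> {}"
  unfolding subsets_of_card_def by (auto elim: obtain_subset_with_card_n)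

lemma image_in_subsets_of_card:
  "inj_on g C \<Longrightarrow> g ` C = C \<Longrightarrow> U \<in> subsets_of_card C a \<Longrightarrow>
    g ` U \<in> subsets_of_card C a"
  unfolding subsets_of_card_def by (auto simp: card_image inj_on_subset)

lemma funpow_image: "(image g ^^ n) U = (g ^^ n) ` U" for g :: "'a \<Rightarrow> 'a"
  by (induction n) (simp_all add: image_comp)

lemma funpow_image_fixed:
  "\<forall>y\<in>C. (g ^^ d) y = y \<Longrightarrow> U \<subseteq> C \<Longrightarrow> (image g ^^ d) U = U"
  unfolding funpow_image by (simp add: subset_iff cong: image_cong)

lemma choose_le_mult_num_cycles_subsets:
  assumes "finite C" and "0 < d" and "\<forall>y\<in>C. (g ^^ d) y = y"
  shows "card C choose a \<le> d * num_cycles (image g) (subsets_of_card C a)"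
  using card_le_mult_num_cycles[where f = "image g", OF finite_subsets_of_card[OF assms(1)] assms(2)]
    funpow_image_fixed[OF assms(3)]
  by (simp add: n_subsets[OF assms(1)] subsets_of_card_def)

lemma num_cycles_subsets_pos:
  "finite C \<Longrightarrow> a \<le> card C \<Longrightarrow> 0 < num_cycles f (subsets_of_card C a)"
  by (simp add: num_cycles_pos finite_subsets_of_card subsets_of_card_nonempty)

lemma exists_subset_with_traces:
  assumes "finite M" and "C \<subseteq> M" and "S \<subseteq> M" and "C \<inter> S = {}" and "U \<subseteq> C"
    and "b \<le> card S" and "card U + b \<le> k" and "k - (card U + b) \<le> card M - card C - card S"
  shows "\<exists>A \<in> subsets_of_card M k. A \<inter> C = U \<and> card (A \<inter> S) = b"
proof -
  have fin: "finite C" "finite S" "finite U"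
    using finite_subset[OF assms(2,1)] finite_subset[OF assms(3,1)] finite_subset[OF assms(5)] by auto
  obtain V where V: "V \<subseteq> S" "card V = b" "finite V"
    using assms(6) by (rule obtain_subset_with_card_n)
  have "card (M - (C \<union> S)) = card M - card C - card S"
    using assms(2-4) fin by (simp add: card_Diff_subset card_Un_disjoint)
  then have "k - (card U + b) \<le> card (M - (C \<union> S))"
    using assms(8) by simp
  then obtain W where W: "W \<subseteq> M - (C \<union> S)" "card W = k - (card U + b)" "finite W"
    by (rule obtain_subset_with_card_n)
  have "card (U \<union> V) = card U + b"
    using V assms(4,5) fin(3) by (subst card_Un_disjoint) auto
  moreover have "card (U \<union> V \<union> W) = card (U \<union> V) + card W"
    using V W assms(5) fin(3) by (intro card_Un_disjoint) auto
  ultimately have "card (U \<union> V \<union> W) = k"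
    using W(2) assms(7) by simp
  moreover have "U \<union> V \<union> W \<subseteq> M" and "(U \<union> V \<union> W) \<inter> C = U"
    and "(U \<union> V \<union> W) \<inter> S = V"
    using V(1) W(1) assms(2-5) by auto
  ultimately show ?thesis
    using V(2) unfolding subsets_of_card_def by (intro bexI[of _ "U \<union> V \<union> W"]) auto
qed

lemma card_orbit_eq_funpow_dist1: "x \<in> orbit g x \<Longrightarrow> card (orbit g x) = funpow_dist1 g x x"
  using card_image[OF inj_on_funpow_dist1] orbit_conv_funpow_dist1 by fastforce

lemma permutation_orbit_eq: "permutation g \<Longrightarrow> y \<in> orbit g x \<Longrightarrow> orbit g y = orbit g x"
  by (rule orbit_cyclic_eq3[OF cyclic_on_orbit'])

lemma permutation_finite_orbit: "permutation g \<Longrightarrow> finite (orbit g x)"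
  by (simp add: finite_orbit permutation_self_in_orbit)

lemma permutation_card_orbit_pos: "permutation g \<Longrightarrow> 0 < card (orbit g x)"
  by (simp add: card_gt_0_iff permutation_finite_orbit orbit_nonempty)

lemma permutation_funpow_card_orbit:
  assumes "permutation g" and "y \<in> orbit g x"
  shows "(g ^^ card (orbit g x)) y = y"
proof -
  have self: "y \<in> orbit g y" using assms(1) by (rule permutation_self_in_orbit)
  have "card (orbit g x) = funpow_dist1 g y y"
    using permutation_orbit_eq[OF assms] card_orbit_eq_funpow_dist1[OF self] by simp
  then show ?thesis using funpow_dist1_prop[OF self] by simp
qed

lemma permutation_image_orbit: "permutation g \<Longrightarrow> g ` orbit g x = orbit g x"
proof (intro equalityI subsetI)
  fix y assume perm: "permutation g" and y: "y \<in> orbit g x"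
  let ?n = "card (orbit g x) - 1"
  have "g ((g ^^ ?n) y) = (g ^^ Suc ?n) y" by simp
  also have "Suc ?n = card (orbit g x)" using permutation_card_orbit_pos[OF perm] by simp
  also have "(g ^^ card (orbit g x)) y = y" using perm y by (rule permutation_funpow_card_orbit)
  finally show "y \<in> g ` orbit g x" by (rule image_eqI[OF sym funpow_in_orbit[OF y]])
qed (auto intro: orbit.step)

lemma permutation_orbits_disjoint:
  assumes "permutation g" and "y \<notin> orbit g x"
  shows "orbit g x \<inter> orbit g y = {}"
proof -
  have False if "z \<in> orbit g x" "z \<in> orbit g y" for z
  proof -
    have "orbit g y = orbit g x"
      using permutation_orbit_eq[OF assms(1) that(1)] permutation_orbit_eq[OF assms(1) that(2)] by simp
    then show False using assms permutation_self_in_orbit[of g y] by simp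
  qed
  then show ?thesis by blast
qed

lemma sum_num_cycles_subsets_le_num_cycles_ksubsets:
  fixes g :: "nat \<Rightarrow> nat"
  assumes g: "g permutes {1..m}"
    and C: "C \<subseteq> {1..m}" "g ` C = C" "0 < d" "\<forall>y\<in>C. (g ^^ d) y = y"
    and S: "S \<subseteq> {1..m}" "g ` S = S" "C \<inter> S = {}"
    and F: "finite F"
      "\<forall>(a, b)\<in>F. a \<le> card C \<and> b \<le> card S \<and> a + b \<le> k \<and>
        k - (a + b) \<le> m - card C - card S"
  shows "(\<Sum>(a, b)\<in>F. num_cycles (image g) (subsets_of_card C a))
           \<le> num_cycles (image g) (ksubsets m k)"
proof -
  let ?Y = "subsets_of_card C" and ?X = "ksubsets m k"
  define h where "h A = ((card (A \<inter> C), card (A \<inter> S)),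
                         cyc_orbit (image g) (?Y (card (A \<inter> C))) (A \<inter> C))" for A
  have inj: "inj g" using g by (rule permutes_inj)
  have fin_X: "finite ?X"
    by (simp add: ksubsets_eq_subsets_of_card finite_subsets_of_card)
  have closed: "\<forall>A\<in>?X. g ` A \<in> ?X"
    using image_in_subsets_of_card[OF inj_on_subset[OF inj] permutes_image[OF g]]
    by (simp add: ksubsets_eq_subsets_of_card)
  have orbit_shift: "cyc_orbit (image g) Y (g ` U) = cyc_orbit (image g) Y U" if "U \<subseteq> C" for U Y
    using cyc_orbit_apply[OF C(3) funpow_image_fixed[OF C(4) that]] .
  have "h (g ` A) = h A" for A
  proof -
    have "g ` A \<inter> C = g ` (A \<inter> C)" "g ` A \<inter> S = g ` (A \<inter> S)"
      using C(2) S(2) by (simp_all add: image_Int[OF inj])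
    then show ?thesis
      unfolding h_def using orbit_shift[of "A \<inter> C"] by (simp add: card_image inj_on_subset[OF inj])
  qed
  then have "card (h ` ?X) \<le> num_cycles (image g) ?X"
    by (intro card_image_le_num_cycles[OF fin_X closed]) simp
  moreover have "(SIGMA p:F. cyc_orbit (image g) (?Y (fst p)) ` ?Y (fst p)) \<subseteq> h ` ?X"
  proof
    fix z assume "z \<in> (SIGMA p:F. cyc_orbit (image g) (?Y (fst p)) ` ?Y (fst p))"
    then obtain a b U where z: "z = ((a, b), cyc_orbit (image g) (?Y a) U)"
      and ab: "(a, b) \<in> F" and U: "U \<subseteq> C" "card U = a"
      by (auto simp: subsets_of_card_def)
    have "b \<le> card S \<and> a + b \<le> k \<and> k - (a + b) \<le> m - card C - card S"
      using F(2) ab by auto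
    then obtain A where A: "A \<in> ?X" "A \<inter> C = U" "card (A \<inter> S) = b"
      using exists_subset_with_traces[of "{1..m}" C S U b k] C(1) S(1,3) U
      by (auto simp: ksubsets_eq_subsets_of_card)
    then have "h A = z" using U z by (simp add: h_def)
    then show "z \<in> h ` ?X" using A(1) by blast
  qed
  then have "card (SIGMA p:F. cyc_orbit (image g) (?Y (fst p)) ` ?Y (fst p)) \<le> card (h ` ?X)"
    using fin_X by (intro card_mono) auto
  moreover have "card (SIGMA p:F. cyc_orbit (image g) (?Y (fst p)) ` ?Y (fst p))
      = (\<Sum>(a, b)\<in>F. num_cycles (image g) (?Y a))"
    using F(1) finite_subset[OF C(1)]
    by (subst card_SigmaI) (auto simp: num_cycles_def finite_subsets_of_card split_def)
  ultimately show ?thesis by linarith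
qed

lemma sum_num_cycles_orbit_le_num_cycles_ksubsets:
  fixes g :: "nat \<Rightarrow> nat"
  assumes g: "g permutes {1..m}" and x: "x \<in> {1..m}" and A: "finite A"
    "\<forall>a\<in>A. a \<le> card (orbit g x) \<and> a \<le> k \<and> k - a \<le> m - card (orbit g x)"
  shows "(\<Sum>a\<in>A. num_cycles (image g) (subsets_of_card (orbit g x) a))
           \<le> num_cycles (image g) (ksubsets m k)"
proof -
  have perm: "permutation g" using permutes_imp_permutation[OF _ g] by simp
  let ?F = "(\<lambda>a. (a, 0::nat)) ` A"
  have "(\<Sum>(a, b)\<in>?F. num_cycles (image g) (subsets_of_card (orbit g x) a))
      \<le> num_cycles (image g) (ksubsets m k)"
  proof (rule sum_num_cycles_subsets_le_num_cycles_ksubsets[OF g])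
    show "orbit g x \<subseteq> {1..m}" by (rule permutes_orbit_subset[OF g x])
    show "g ` orbit g x = orbit g x" by (rule permutation_image_orbit[OF perm])
    show "0 < card (orbit g x)" by (rule permutation_card_orbit_pos[OF perm])
    show "\<forall>y\<in>orbit g x. (g ^^ card (orbit g x)) y = y"
      using permutation_funpow_card_orbit[OF perm] by blast
    show "finite ?F" using A(1) by simp
    show "\<forall>(a, b)\<in>?F. a \<le> card (orbit g x) \<and> b \<le> card {} \<and> a + b \<le> k
        \<and> k - (a + b) \<le> m - card (orbit g x) - card {}"
      using A(2) by auto
  qed auto
  also have "(\<Sum>(a, b)\<in>?F. num_cycles (image g) (subsets_of_card (orbit g x) a))
      = (\<Sum>a\<in>A. num_cycles (image g) (subsets_of_card (orbit g x) a))"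
    by (simp add: sum.reindex inj_on_def)
  finally show ?thesis .
qed

lemma choose_le_mult_num_cycles_orbit:
  "permutation g \<Longrightarrow>
    card (orbit g x) choose a \<le> card (orbit g x) * num_cycles (image g) (subsets_of_card (orbit g x) a)"
  by (simp add: choose_le_mult_num_cycles_subsets permutation_finite_orbit
      permutation_card_orbit_pos permutation_funpow_card_orbit)

lemma choose_le_mult_num_cycles_ksubsets:
  fixes g :: "nat \<Rightarrow> nat"
  assumes "g permutes {1..m}" and "0 < d" and "\<forall>y\<in>{1..m}. (g ^^ d) y = y"
  shows "m choose k \<le> d * num_cycles (image g) (ksubsets m k)"
  using choose_le_mult_num_cycles_subsets[OF _ assms(2,3)]
  by (simp add: ksubsets_eq_subsets_of_card)

lemma double_choose_two: "2 * (n choose 2) = n * (n - 1)"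
proof -
  have "even (n * (n - 1))" by (cases "even n") auto
  then show ?thesis by (simp add: choose_two)
qed

lemma four_mult_less_choose_three: "7 \<le> n \<Longrightarrow> 4 * n < n choose 3"
proof (induction n rule: nat_induct_at_least)
  case base
  then show ?case by (simp add: numeral_eq_Suc)
next
  case (Suc n)
  have "7 * 6 \<le> n * (n - 1)" using Suc(1) by (intro mult_le_mono) auto
  then have "4 \<le> n choose 2" using double_choose_two[of n] by linarith
  moreover have "Suc n choose 3 = (n choose 2) + (n choose 3)" by (simp add: numeral_eq_Suc)
  ultimately show ?case using Suc by simp
qed

lemma five_le_num_cycles_ksubsets_short_cycles:
  fixes g :: "nat \<Rightarrow> nat"
  assumes g: "g permutes {1..m}" and short: "\<forall>y\<in>{1..m}. card (orbit g y) \<le> 3"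
    and k: "2 \<le> k" "2 * k \<le> m"
    and not_exceptional: "\<not> (k = 3 \<and> m = 6)" "\<not> (k = 2 \<and> m \<le> 9)"
  shows "5 \<le> num_cycles (image g) (ksubsets m k)"
proof -
  let ?N = "num_cycles (image g) (ksubsets m k)"
  have perm: "permutation g" using permutes_imp_permutation[OF _ g] by simp
  have "(g ^^ 6) y = y" if "y \<in> {1..m}" for y
  proof -
    have "card (orbit g y) \<in> {1, 2, 3}"
      using short that permutation_card_orbit_pos[OF perm, of y] by force
    then have "6 mod card (orbit g y) = 0" by auto
    then show ?thesis
      using funpow_mod_eq[where f = g and n = "card (orbit g y)" and x = y and m = 6]
        permutation_funpow_card_orbit[OF perm] permutation_self_in_orbit[OF perm] by simp
  qed
  then have bound: "m choose k \<le> 6 * ?N"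
    using choose_le_mult_num_cycles_ksubsets[OF g] by simp
  show ?thesis
  proof (cases "k = 2")
    case True
    have "10 * 9 \<le> m * (m - 1)" using True not_exceptional(2) by (intro mult_le_mono) auto
    then have "45 \<le> m choose 2" using double_choose_two[of m] by linarith
    moreover have "m choose 2 \<le> 6 * ?N" using bound True by simp
    ultimately show ?thesis by linarith
  next
    case False
    then have "7 \<le> m" "3 \<le> k" using k not_exceptional(1) by auto
    then have "4 * m < m choose k"
      using four_mult_less_choose_three binomial_mono[of 3 k m] k(2) by fastforce
    then show ?thesis using bound \<open>7 \<le> m\<close> by linarith
  qed
qed

lemma five_le_num_cycles_ksubsets_of_orbit_choose:
  fixes g :: "nat \<Rightarrow> nat"
  assumes g: "g permutes {1..m}" and x: "x \<in> {1..m}"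
    and a: "a \<le> card (orbit g x)" "a \<le> k" "k - a \<le> m - card (orbit g x)"
    and large: "4 * card (orbit g x) < card (orbit g x) choose a"
  shows "5 \<le> num_cycles (image g) (ksubsets m k)"
proof -
  let ?L = "card (orbit g x)" and ?n = "num_cycles (image g) (subsets_of_card (orbit g x) a)"
  have perm: "permutation g" using permutes_imp_permutation[OF _ g] by simp
  have "?n \<le> num_cycles (image g) (ksubsets m k)"
    using sum_num_cycles_orbit_le_num_cycles_ksubsets[OF g x, of "{a}"] a by simp
  moreover have "?L * 4 < ?L * ?n"
    using large choose_le_mult_num_cycles_orbit[OF perm, of x a] by linarith
  ultimately show ?thesis by simp
qed

lemma five_le_num_cycles_ksubsets_long_cycle:
  fixes g :: "nat \<Rightarrow> nat"
  assumes g: "g permutes {1..m}" and x: "x \<in> {1..m}" and long: "4 \<le> card (orbit g x)"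
    and k: "3 \<le> k" "k + 4 \<le> m" "2 * k \<le> m"
  shows "5 \<le> num_cycles (image g) (ksubsets m k)"
proof -
  let ?L = "card (orbit g x)" and ?N = "num_cycles (image g) (ksubsets m k)"
  define n where "n a = num_cycles (image g) (subsets_of_card (orbit g x) a)" for a
  have perm: "permutation g" using permutes_imp_permutation[OF _ g] by simp
  have L_le: "?L \<le> m"
    using card_mono[OF _ permutes_orbit_subset[OF g x]] by simp
  have pos: "1 \<le> n a" if "a \<le> ?L" for a
    using num_cycles_subsets_pos[OF permutation_finite_orbit[OF perm] that] by (simp add: n_def Suc_le_eq)
  have pos_small: "1 \<le> n 0" "1 \<le> n 1" "1 \<le> n 2" "1 \<le> n 3" "1 \<le> n 4"
    using pos long by simp_all
  have bound: "?L choose a \<le> ?L * n a" for a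
    using choose_le_mult_num_cycles_orbit[OF perm] by (simp add: n_def)
  have sum: "(\<Sum>a\<in>A. n a) \<le> ?N"
    if "finite A" "\<forall>a\<in>A. a \<le> ?L \<and> a \<le> k \<and> k - a \<le> m - ?L" for A
    using sum_num_cycles_orbit_le_num_cycles_ksubsets[OF g x that] by (simp add: n_def)
  consider "?L \<le> k" | "7 \<le> ?L" | "?L = 4" "k = 3" | "?L = 5" | "?L = 6"
    using long k by linarith
  then show ?thesis
  proof cases
    case 1
    then have "(\<Sum>a\<in>{0, 1, 2, 3, 4}. n a) \<le> ?N" using long k by (intro sum) auto
    then show ?thesis using pos_small by simp
  next
    case 2
    define a where "a = max 3 (k - (m - ?L))"
    have a: "2 * a \<le> ?L" "3 \<le> a" "a \<le> k" "k - a \<le> m - ?L"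
      using 2 k L_le by (auto simp: a_def)
    then have "4 * ?L < ?L choose a"
      using four_mult_less_choose_three[OF 2] binomial_mono[of 3 a ?L] by linarith
    then show ?thesis
      using five_le_num_cycles_ksubsets_of_orbit_choose[OF g x, of a k] a by simp
  next
    case 3
    then have "(\<Sum>a\<in>{0, 1, 2, 3}. n a) \<le> ?N" using k by (intro sum) auto
    moreover have "2 \<le> n 2" using bound[of 2] 3 by (simp add: numeral_eq_Suc)
    ultimately show ?thesis using pos_small by simp
  next
    case 4
    then have "(\<Sum>a\<in>{1, 2, 3}. n a) \<le> ?N" using k by (intro sum) auto
    moreover have "2 \<le> n 2" "2 \<le> n 3"
      using bound[of 2] bound[of 3] 4 by (simp_all add: numeral_eq_Suc)
    ultimately show ?thesis using pos_small by simp
  next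
    case 5
    then have "(\<Sum>a\<in>{2, 3}. n a) \<le> ?N" using k by (intro sum) auto
    moreover have "3 \<le> n 2" "4 \<le> n 3"
      using bound[of 2] bound[of 3] 5 by (simp_all add: numeral_eq_Suc)
    ultimately show ?thesis by simp
  qed
qed

lemma orbit_pred_le_double_num_cycles_2subsets:
  assumes "permutation g"
  shows "card (orbit g x) - 1 \<le> 2 * num_cycles (image g) (subsets_of_card (orbit g x) 2)"
proof -
  let ?L = "card (orbit g x)" and ?n = "num_cycles (image g) (subsets_of_card (orbit g x) 2)"
  have "?L * (?L - 1) \<le> 2 * (?L * ?n)"
    using choose_le_mult_num_cycles_orbit[OF assms, of x 2] double_choose_two[of ?L] by linarith
  then have "?L * (?L - 1) \<le> ?L * (2 * ?n)" by (simp add: ac_simps)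
  then show ?thesis using permutation_card_orbit_pos[OF assms] mult_le_cancel1 by blast
qed

lemma five_le_num_cycles_2subsets_long_cycle:
  fixes g :: "nat \<Rightarrow> nat"
  assumes g: "g permutes {1..m}" and x: "x \<in> {1..m}" and long: "6 \<le> card (orbit g x)"
    and m: "10 \<le> m"
  shows "5 \<le> num_cycles (image g) (ksubsets m 2)"
proof -
  let ?L = "card (orbit g x)" and ?N = "num_cycles (image g) (ksubsets m 2)"
  define n where "n a = num_cycles (image g) (subsets_of_card (orbit g x) a)" for a
  have perm: "permutation g" using permutes_imp_permutation[OF _ g] by simp
  have L_le: "?L \<le> m"
    using card_mono[OF _ permutes_orbit_subset[OF g x]] by simp
  have pos: "1 \<le> n 0" "1 \<le> n 1"
    using num_cycles_subsets_pos[OF permutation_finite_orbit[OF perm]] long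
    by (simp_all add: n_def Suc_le_eq)
  have n2: "?L - 1 \<le> 2 * n 2"
    using orbit_pred_le_double_num_cycles_2subsets[OF perm] by (simp add: n_def)
  have sum: "(\<Sum>a\<in>A. n a) \<le> ?N"
    if "finite A" "\<forall>a\<in>A. a \<le> ?L \<and> a \<le> 2 \<and> 2 - a \<le> m - ?L" for A
    using sum_num_cycles_orbit_le_num_cycles_ksubsets[OF g x that] by (simp add: n_def)
  consider "10 \<le> ?L" | "?L \<le> 9" "m = ?L + 1" | "?L + 2 \<le> m"
    using L_le m by linarith
  then show ?thesis
  proof cases
    case 1
    have "?L * 9 \<le> ?L * (?L - 1)" using 1 by (intro mult_le_mono2) auto
    then have "4 * ?L < ?L choose 2" using double_choose_two[of ?L] 1 by linarith
    then show ?thesis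
      using five_le_num_cycles_ksubsets_of_orbit_choose[OF g x, of 2 2] 1 L_le by simp
  next
    case 2
    then have "(\<Sum>a\<in>{1, 2}. n a) \<le> ?N" using long by (intro sum) auto
    then show ?thesis using pos n2 2 m by simp
  next
    case 3
    then have "(\<Sum>a\<in>{0, 1, 2}. n a) \<le> ?N" using long by (intro sum) auto
    then show ?thesis using pos n2 long by simp
  qed
qed

lemma five_le_num_cycles_2subsets_medium_cycles:
  fixes g :: "nat \<Rightarrow> nat"
  assumes g: "g permutes {1..m}" and short: "\<forall>y\<in>{1..m}. card (orbit g y) \<le> 5"
    and x: "x \<in> {1..m}" and medium: "4 \<le> card (orbit g x)" and m: "10 \<le> m"
  shows "5 \<le> num_cycles (image g) (ksubsets m 2)"
proof -
  let ?C = "orbit g x" and ?N = "num_cycles (image g) (ksubsets m 2)"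
  have perm: "permutation g" using permutes_imp_permutation[OF _ g] by simp
  have C: "?C \<subseteq> {1..m}" "finite ?C" "card ?C \<le> 5"
    using permutes_orbit_subset[OF g x] permutation_finite_orbit[OF perm] short x by auto
  have "\<not> {1..m} \<subseteq> ?C"
  proof
    assume "{1..m} \<subseteq> ?C"
    then have "m \<le> card ?C" using card_mono[OF C(2)] by (metis card_atLeastAtMost diff_Suc_1)
    then show False using C(3) m by simp
  qed
  then obtain y where y: "y \<in> {1..m}" "y \<notin> ?C" by blast
  let ?S = "orbit g y"
  have S: "?S \<subseteq> {1..m}" "card ?S \<le> 5" "?C \<inter> ?S = {}"
    using permutes_orbit_subset[OF g y(1)] short y(1) permutation_orbits_disjoint[OF perm y(2)]
    by auto
  have card_CS: "card (?C \<union> ?S) = card ?C + card ?S"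
    using C(2) permutation_finite_orbit[OF perm] S(3) by (rule card_Un_disjoint)
  show ?thesis
  proof (cases "?C \<union> ?S = {1..m}")
    case True
    then have sizes: "m = 10" "card ?C = 5" "card ?S = 5" using card_CS C(3) S(2) m by simp_all
    have "(g ^^ 5) z = z" if "z \<in> {1..m}" for z
    proof -
      have "z \<in> ?C \<or> z \<in> ?S" using True that by blast
      then show ?thesis
        using permutation_funpow_card_orbit[OF perm, of z x]
          permutation_funpow_card_orbit[OF perm, of z y] sizes by auto
    qed
    then have "m choose 2 \<le> 5 * ?N" using choose_le_mult_num_cycles_ksubsets[OF g] by simp
    then show ?thesis using sizes by (simp add: choose_two)
  next
    case False
    then have "card (?C \<union> ?S) < m"
      using C(1) S(1) psubset_card_mono[of "{1..m}" "?C \<union> ?S"] by fastforce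
    then have F: "\<forall>(a, b)\<in>{(2, 0), (1, 0), (1, 1), (0, 1)}.
        a \<le> card ?C \<and> b \<le> card ?S \<and> a + b \<le> 2 \<and> 2 - (a + b) \<le> m - card ?C - card ?S"
      using card_CS medium permutation_card_orbit_pos[OF perm, of y] by auto
    have "(\<Sum>(a, b)\<in>{(2, 0), (1, 0), (1, 1), (0::nat, 1::nat)}.
        num_cycles (image g) (subsets_of_card ?C a)) \<le> ?N"
      using sum_num_cycles_subsets_le_num_cycles_ksubsets[OF g C(1) permutation_image_orbit[OF perm]
          permutation_card_orbit_pos[OF perm, of x] _ S(1) permutation_image_orbit[OF perm] S(3) _ F]
        permutation_funpow_card_orbit[OF perm, of _ x] by simp
    moreover have "1 \<le> num_cycles (image g) (subsets_of_card ?C 0)"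
      "1 \<le> num_cycles (image g) (subsets_of_card ?C 1)"
      using num_cycles_subsets_pos[OF C(2)] medium by (simp_all add: Suc_le_eq)
    moreover have "2 \<le> num_cycles (image g) (subsets_of_card ?C 2)"
      using orbit_pred_le_double_num_cycles_2subsets[OF perm, of x] medium by linarith
    ultimately show ?thesis by simp
  qed
qed

lemma five_le_num_cycles_ksubsets:
  fixes g :: "nat \<Rightarrow> nat"
  assumes g: "g permutes {1..m}" and k: "2 \<le> k" "2 * k \<le> m"
    and not_exceptional: "\<not> (k = 3 \<and> m = 6)" "\<not> (k = 2 \<and> m \<le> 9)"
  shows "5 \<le> num_cycles (image g) (ksubsets m k)"
proof (cases "\<forall>y\<in>{1..m}. card (orbit g y) \<le> 3")
  case True
  then show ?thesis by (rule five_le_num_cycles_ksubsets_short_cycles[OF g _ k not_exceptional])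
next
  case False
  then obtain x where x: "x \<in> {1..m}" "4 \<le> card (orbit g x)" by force
  show ?thesis
  proof (cases "k = 2")
    case True
    then have m: "10 \<le> m" using not_exceptional by auto
    show ?thesis
    proof (cases "\<forall>y\<in>{1..m}. card (orbit g y) \<le> 5")
      case True
      then show ?thesis
        using five_le_num_cycles_2subsets_medium_cycles[OF g True x m] \<open>k = 2\<close> by simp
    next
      case False
      then obtain y where "y \<in> {1..m}" "6 \<le> card (orbit g y)" by force
      then show ?thesis
        using five_le_num_cycles_2subsets_long_cycle[OF g _ _ m] \<open>k = 2\<close> by simp
    qed
  next
    case False
    then have "3 \<le> k" "k + 4 \<le> m" using k not_exceptional by auto
    then show ?thesis using five_le_num_cycles_ksubsets_long_cycle[OF g x] k(2) by simp
  qed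
qed

theorem proposition3p4:
  fixes m k :: nat and H :: "(nat \<Rightarrow> nat) set" and g :: "nat \<Rightarrow> nat"
  assumes "0 < m" and "0 < k" and "2 * k \<le> m"
    and "H = Alt m \<or> H = Sym m"
    and "g \<in> H"
    and "num_cycles (\<lambda>A. g ` A) (ksubsets m k) \<le> 4"
  shows "(k = 3 \<and> m = 6) \<or> (k = 2 \<and> m \<le> 9) \<or> k = 1"
proof (rule ccontr)
  assume not_exceptional: "\<not> ?thesis"
  then have "2 \<le> k" using assms(2) by auto
  moreover have "g permutes {1..m}" using assms(4,5) by (auto simp: Alt_def Sym_def)
  ultimately have "5 \<le> num_cycles (image g) (ksubsets m k)"
    using five_le_num_cycles_ksubsets assms(3) not_exceptional by blast
  then show False using assms(6) by simp
qed

end
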